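(* Let $X$ be a finite connected poset and $\varphi:I(X,\mathbb{Z}_2)\to I(X,\mathbb{Z}_2)$ a bijective additive map. Then $\varphi(E(I(X,\mathbb{Z}_2)))\subseteq E(I(X,\mathbb{Z}_2))$ if and only if $\varphi=\tau\circ\psi$ for some bijective shift map $\tau$ and some Lie automorphism $\psi$ of $I(X,\mathbb{Z}_2)$.
   Context: $I(X,\mathbb{Z}_2)$ is the incidence algebra of the locally finite poset $X$ over the two-element field: functions $f:X\times X\to\mathbb{Z}_2$ vanishing unless $x\le y$, with product $(fg)(x,y)=\sum_{x\le z\le y}f(x,z)g(z,y)$. A poset is connected if any two elements are joined by a finite sequence of elements in which consecutive elements are comparable. $E(A)$ denotes the idempotents of $A$. A shift map is an additive map $\tau:I(X,\mathbb{Z}_2)\to I(X,\mathbb{Z}_2)$ such that $\tau(f)-f$ lies in the center of $I(X,\mathbb{Z}_2)$ for all $f$. A Lie automorphism of $I(X,\mathbb{Z}_2)$ is a bijective additive map $\psi$ with $\psi(ab+ba)=\psi(a)\psi(b)+\psi(b)\psi(a)$ for all $a,b$. *)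

theory Defs
  imports Main "HOL-Library.Z2" "HOL-Library.Function_Algebras"
begin

text \<open>The finite poset X is the (finite) type 'a with its order; the field Z_2 is the type bit.
An element of the incidence algebra I(X,Z_2) is a function f :: 'a => 'a => bit with
f x y = 0 unless x <= y.\<close>

definition poset_connected :: "('a::order) itself \<Rightarrow> bool" where
  "poset_connected _ \<longleftrightarrow> (\<forall>x y::'a. (\<lambda>a b. a \<le> b \<or> b \<le> a)\<^sup>*\<^sup>* x y)"

definition IA :: "('a::order \<Rightarrow> 'a \<Rightarrow> bit) set" where
  "IA = {f. \<forall>x y. \<not> x \<le> y \<longrightarrow> f x y = 0}"

definition ia_mult :: "('a::{order,finite} \<Rightarrow> 'a \<Rightarrow> bit) \<Rightarrow> ('a \<Rightarrow> 'a \<Rightarrow> bit) \<Rightarrow> ('a \<Rightarrow> 'a \<Rightarrow> bit)" where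
  "ia_mult f g = (\<lambda>x y. if x \<le> y then (\<Sum>z\<in>{z. x \<le> z \<and> z \<le> y}. f x z * g z y) else 0)"

definition ia_center :: "('a::{order,finite} \<Rightarrow> 'a \<Rightarrow> bit) set" where
  "ia_center = {c \<in> IA. \<forall>f\<in>IA. ia_mult c f = ia_mult f c}"

definition ia_idempotents :: "('a::{order,finite} \<Rightarrow> 'a \<Rightarrow> bit) set" where
  "ia_idempotents = {e \<in> IA. ia_mult e e = e}"

text \<open>Additive self-map of I(X,Z_2) (values outside IA are irrelevant).\<close>
definition ia_additive :: "(('a::order \<Rightarrow> 'a \<Rightarrow> bit) \<Rightarrow> ('a \<Rightarrow> 'a \<Rightarrow> bit)) \<Rightarrow> bool" where
  "ia_additive \<phi> \<longleftrightarrow> \<phi> ` IA \<subseteq> IA \<and> (\<forall>f\<in>IA. \<forall>g\<in>IA. \<phi> (f + g) = \<phi> f + \<phi> g)"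

definition ia_bijective :: "(('a::order \<Rightarrow> 'a \<Rightarrow> bit) \<Rightarrow> ('a \<Rightarrow> 'a \<Rightarrow> bit)) \<Rightarrow> bool" where
  "ia_bijective \<phi> \<longleftrightarrow> bij_betw \<phi> IA IA"

definition shift_map :: "(('a::{order,finite} \<Rightarrow> 'a \<Rightarrow> bit) \<Rightarrow> ('a \<Rightarrow> 'a \<Rightarrow> bit)) \<Rightarrow> bool" where
  "shift_map \<tau> \<longleftrightarrow> ia_additive \<tau> \<and> (\<forall>f\<in>IA. \<tau> f - f \<in> ia_center)"

definition lie_automorphism :: "(('a::{order,finite} \<Rightarrow> 'a \<Rightarrow> bit) \<Rightarrow> ('a \<Rightarrow> 'a \<Rightarrow> bit)) \<Rightarrow> bool" where
  "lie_automorphism \<psi> \<longleftrightarrow> ia_additive \<psi> \<and> ia_bijective \<psi> \<and>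
     (\<forall>a\<in>IA. \<forall>b\<in>IA. \<psi> (ia_mult a b + ia_mult b a) = ia_mult (\<psi> a) (\<psi> b) + ia_mult (\<psi> b) (\<psi> a))"

end

theory Submission
  imports Defs
begin

text \<open>
  Let \<open>\<phi>\<close> be additive, bijective and idempotent-preserving. Its defects
  \<open>Q a = \<phi>(a\<^sup>2) + \<phi>(a)\<^sup>2\<close> and \<open>B a b = \<phi>(ab + ba) + (\<phi>(a)\<phi>(b) + \<phi>(b)\<phi>(a))\<close> satisfy
  \<open>Q (a + b) = Q a + Q b + B a b\<close> and \<open>Q\<close> vanishes on idempotents. Testing this on sums of
  matrix units that are idempotent determines \<open>B\<close> on pairs of matrix units in terms of \<open>Q\<close>,
  and an induction on the length of the interval \<open>[u, v]\<close> shows that \<open>Q e\<^sub>u\<^sub>v\<close> is central;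
  by bilinearity all values of \<open>Q\<close> and \<open>B\<close> are central. On a connected poset central
  elements are scalars, so adding to \<open>\<phi> a\<close> the scalar that restores one diagonal entry of
  \<open>a\<close> yields a bijection \<open>\<psi>\<close> preserving squares, hence brackets, and \<open>\<phi> = (\<phi> \<circ> \<psi>\<inverse>) \<circ> \<psi>\<close>
  with \<open>\<phi> \<circ> \<psi>\<inverse>\<close> a shift map.

  Conversely, if \<open>\<psi>\<close> is a Lie automorphism and \<open>e\<close> an idempotent, then \<open>[e, [e, x]] = [e, x]\<close>
  shows that \<open>\<psi>(e)\<^sup>2 + \<psi>(e)\<close> is central, hence a scalar, and its diagonal entries are
  \<open>t\<^sup>2 + t = 0\<close>; a shift map only adds a scalar, which keeps idempotents idempotent.
\<close>

section \<open>Matrices indexed by a finite type\<close>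

text \<open>Unlike \<open>ia_mult\<close>, this product sums over the whole index type, which makes the ring laws
  routine; the two products agree on \<open>IA\<close>.\<close>

definition mat_mul :: "('a::finite \<Rightarrow> 'a \<Rightarrow> 'b::semiring_0) \<Rightarrow> ('a \<Rightarrow> 'a \<Rightarrow> 'b) \<Rightarrow> 'a \<Rightarrow> 'a \<Rightarrow> 'b" where
  "mat_mul f g = (\<lambda>x y. \<Sum>z\<in>UNIV. f x z * g z y)"

definition unit_mat :: "'a \<Rightarrow> 'a \<Rightarrow> 'a \<Rightarrow> 'a \<Rightarrow> 'b::zero_neq_one" where
  "unit_mat u v = (\<lambda>x y. if x = u \<and> y = v then 1 else 0)"

definition scalar_mat :: "'b::zero \<Rightarrow> 'a \<Rightarrow> 'a \<Rightarrow> 'b" where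
  "scalar_mat k = (\<lambda>x y. if x = y then k else 0)"

lemma mult_if_zero [simp]:
  "(if P then a else 0) * b = (if P then a * b else (0::'b::mult_zero))"
  "b * (if P then a else 0) = (if P then b * a else 0)"
  by simp_all

lemma mat_mul_assoc: "mat_mul (mat_mul f g) h = mat_mul f (mat_mul g h)"
proof (intro ext)
  fix x y
  have "mat_mul (mat_mul f g) h x y = (\<Sum>z\<in>UNIV. \<Sum>w\<in>UNIV. f x w * g w z * h z y)"
    by (simp add: mat_mul_def sum_distrib_right)
  also have "\<dots> = (\<Sum>w\<in>UNIV. \<Sum>z\<in>UNIV. f x w * g w z * h z y)"
    by (rule sum.swap)
  also have "\<dots> = mat_mul f (mat_mul g h) x y"
    by (simp add: mat_mul_def sum_distrib_left mult.assoc)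
  finally show "mat_mul (mat_mul f g) h x y = mat_mul f (mat_mul g h) x y" .
qed

lemma mat_mul_add_left: "mat_mul (f + g) h = mat_mul f h + mat_mul g h"
  by (simp add: mat_mul_def fun_eq_iff distrib_right sum.distrib)

lemma mat_mul_add_right: "mat_mul h (f + g) = mat_mul h f + mat_mul h g"
  by (simp add: mat_mul_def fun_eq_iff distrib_left sum.distrib)

lemma mat_mul_zero [simp]: "mat_mul 0 f = 0" "mat_mul f 0 = 0"
  by (simp_all add: mat_mul_def fun_eq_iff)

lemma mat_mul_unit_left:
  "mat_mul (unit_mat u v) g = (\<lambda>x y. if x = u then g v y else (0::'b::semiring_1))"
  by (simp add: mat_mul_def unit_mat_def fun_eq_iff)

lemma mat_mul_unit_right:
  "mat_mul f (unit_mat u v) = (\<lambda>x y. if y = v then f x u else (0::'b::semiring_1))"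
  by (simp add: mat_mul_def unit_mat_def fun_eq_iff)

lemma mat_mul_unit_unit:
  "mat_mul (unit_mat u v) (unit_mat w z) = (if v = w then unit_mat u z else (0 :: _ \<Rightarrow> _ \<Rightarrow> 'b::semiring_1))"
  unfolding mat_mul_unit_left by (auto simp: unit_mat_def fun_eq_iff)

lemma mat_mul_scalar_left: "mat_mul (scalar_mat k) f = (\<lambda>x y. k * (f x y :: 'b::semiring_1))"
  by (simp add: mat_mul_def scalar_mat_def fun_eq_iff)

lemma mat_mul_scalar_right: "mat_mul f (scalar_mat k) = (\<lambda>x y. (f x y :: 'b::semiring_1) * k)"
  by (simp add: mat_mul_def scalar_mat_def fun_eq_iff)

section \<open>The incidence algebra over \<open>\<int>\<^sub>2\<close>\<close>

type_synonym 'a bmat = "'a \<Rightarrow> 'a \<Rightarrow> bit"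

lemma bit_add_self [simp]: "(x::bit) + x = 0"
  by (cases x) simp_all

lemma bit_mult_self [simp]: "(x::bit) * x = x"
  by (cases x) simp_all

declare add_bit_eq_xor [simp del] mult_bit_eq_and [simp del]

lemma bmat_add_self [simp]: "(f::'a bmat) + f = 0"
  by (simp add: fun_eq_iff)

lemma bmat_times_two [simp]: "2 * (f::'a bmat) = 0"
  by (simp add: fun_eq_iff)

lemma bmat_add_cancel_left [simp]: "(f::'a bmat) + (f + g) = g"
  by (simp flip: add.assoc)

lemma bmat_diff_eq_add: "(f::'a bmat) - g = f + g"
  by (simp add: fun_eq_iff)

lemma bmat_add_eq_0_iff: "(f::'a bmat) + g = 0 \<longleftrightarrow> f = g"
  by (metis bmat_add_cancel_left add_0_right)

lemma bmat_add_eq_iff: "(f::'a bmat) + g = h \<longleftrightarrow> f = g + h"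
  by (metis bmat_add_cancel_left add.commute)

lemma IA_iff: "f \<in> IA \<longleftrightarrow> (\<forall>x y. \<not> x \<le> y \<longrightarrow> f x y = 0)"
  by (simp add: IA_def)

lemma IA_zero [simp]: "0 \<in> IA"
  by (simp add: IA_iff)

lemma IA_add [intro]: "f \<in> IA \<Longrightarrow> g \<in> IA \<Longrightarrow> f + g \<in> IA"
  by (simp add: IA_iff)

lemma unit_mat_IA [intro]: "u \<le> v \<Longrightarrow> unit_mat u v \<in> IA"
  by (auto simp: IA_iff unit_mat_def)

lemma scalar_mat_IA [simp]: "scalar_mat k \<in> IA"
  by (simp add: IA_iff scalar_mat_def)

lemma sum_in_interval_eq_sum_UNIV:
  fixes f g :: "'a::{order,finite} bmat"
  assumes "f \<in> IA" "g \<in> IA"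
  shows "(\<Sum>z\<in>{z. x \<le> z \<and> z \<le> y}. f x z * g z y) = (\<Sum>z\<in>UNIV. f x z * g z y)"
  by (rule sum.mono_neutral_left) (use assms in \<open>auto simp: IA_iff\<close>)

lemma mat_mul_IA [intro]:
  fixes f g :: "'a::{order,finite} bmat"
  assumes "f \<in> IA" "g \<in> IA"
  shows "mat_mul f g \<in> IA"
  unfolding IA_iff
proof (intro allI impI)
  fix x y :: 'a
  assume "\<not> x \<le> y"
  then have "f x z * g z y = 0" for z
    using assms order_trans by (metis IA_iff mult_zero_left mult_zero_right)
  then show "mat_mul f g x y = 0"
    unfolding mat_mul_def by (simp only: sum.neutral_const)
qed

lemma ia_mult_eq_mat_mul:
  fixes f g :: "'a::{order,finite} bmat"
  assumes "f \<in> IA" "g \<in> IA"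
  shows "ia_mult f g = mat_mul f g"
  using mat_mul_IA[OF assms] sum_in_interval_eq_sum_UNIV[OF assms]
  by (auto simp: ia_mult_def mat_mul_def fun_eq_iff IA_iff)

lemma mat_mul_diag:
  fixes f g :: "'a::{order,finite} bmat"
  assumes "f \<in> IA" "g \<in> IA"
  shows "mat_mul f g z z = f z z * g z z"
proof -
  have "mat_mul f g z z = (\<Sum>w\<in>{w. z \<le> w \<and> w \<le> z}. f z w * g w z)"
    using sum_in_interval_eq_sum_UNIV[OF assms] by (simp add: mat_mul_def)
  also have "{w. z \<le> w \<and> w \<le> z} = {z}"
    by auto
  finally show ?thesis
    by simp
qed

text \<open>Applications below instantiate \<open>P\<close> explicitly: higher-order unification would
  eta-expand the matrix argument, and the pointwise simp rules for \<open>0\<close> and \<open>+\<close> on functions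
  then destroy the folded form.\<close>

lemma IA_induct:
  fixes f :: "'a::{order,finite} bmat"
  assumes "f \<in> IA" "P 0" "\<And>u v. u \<le> v \<Longrightarrow> P (unit_mat u v)"
    and "\<And>a b. a \<in> IA \<Longrightarrow> b \<in> IA \<Longrightarrow> P a \<Longrightarrow> P b \<Longrightarrow> P (a + b)"
  shows "P f"
proof -
  have "f \<in> IA \<Longrightarrow> {(x, y). f x y \<noteq> 0} = S \<Longrightarrow> P f" if "finite S" for S f
    using that
  proof (induction S arbitrary: f rule: finite_induct)
    case empty
    then have "f = 0"
      by (auto simp: fun_eq_iff)
    then show ?case
      using assms(2) by (rule ssubst[where P = P])
  next
    case (insert p S)
    obtain u v where p: "p = (u, v)"
      by fastforce
    have "(u, v) \<in> {(x, y). f x y \<noteq> 0}"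
      using insert.prems(2) p by simp
    then have "f u v = 1"
      by simp
    then have uv: "u \<le> v" "f u v = 1"
      using insert.prems(1) by (metis IA_iff zero_neq_one)+
    define g where "g = f + unit_mat u v"
    have g: "g \<in> IA"
      using insert.prems(1) uv by (auto simp: g_def)
    have "{(x, y). g x y \<noteq> 0} = S"
      using insert.prems(2) insert.hyps(2) uv(2) p
      by (auto simp: g_def unit_mat_def split: if_splits)
    then have "P g"
      using insert.IH g by blast
    then have "P (g + unit_mat u v)"
      using assms(3,4) g uv(1) by blast
    moreover have "g + unit_mat u v = f"
      by (simp add: g_def add.assoc)
    ultimately show ?case
      by simp
  qed
  then show ?thesis
    using assms(1) finite[of "{(x, y). f x y \<noteq> 0}"] by blast
qed

text \<open>In characteristic 2 this is the Lie bracket \<open>ab - ba\<close>.\<close>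

definition bracket :: "'a::finite bmat \<Rightarrow> 'a bmat \<Rightarrow> 'a bmat" where
  "bracket a b = mat_mul a b + mat_mul b a"

lemma bracket_IA [intro]: "a \<in> IA \<Longrightarrow> b \<in> IA \<Longrightarrow> bracket a b \<in> IA"
  by (auto simp: bracket_def)

lemma bracket_add_left: "bracket (a + b) c = bracket a c + bracket b c"
  by (simp add: bracket_def mat_mul_add_left mat_mul_add_right add_ac)

lemma bracket_add_right: "bracket c (a + b) = bracket c a + bracket c b"
  by (simp add: bracket_def mat_mul_add_left mat_mul_add_right add_ac)

lemma bracket_zero [simp]: "bracket 0 a = 0" "bracket a 0 = 0"
  by (simp_all add: bracket_def)

lemma bracket_self [simp]: "bracket a a = 0"
  by (simp add: bracket_def)

lemma bracket_commute: "bracket a b = bracket b a"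
  by (simp add: bracket_def add.commute)

lemma bracket_eq_0_iff: "bracket a b = 0 \<longleftrightarrow> mat_mul a b = mat_mul b a"
  by (simp add: bracket_def bmat_add_eq_0_iff)

lemma bracket_square_left: "bracket (mat_mul a a) b = bracket a (bracket a b)"
  by (simp add: bracket_def mat_mul_add_left mat_mul_add_right mat_mul_assoc add_ac)

lemma bracket_square_self: "bracket a (mat_mul a a) = 0"
  by (simp add: bracket_def mat_mul_assoc)

lemma square_add:
  "mat_mul (a + b) (a + b) = mat_mul a a + mat_mul b b + bracket a b"
  by (simp add: bracket_def mat_mul_add_left mat_mul_add_right add_ac)

lemma bracket_unit_unit:
  "bracket (unit_mat u v) (unit_mat x y) =
     (if v = x then unit_mat u y else 0) + (if y = u then unit_mat x v else 0)"
  by (simp add: bracket_def mat_mul_unit_unit)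

lemma bracket_scalar [simp]: "bracket f (scalar_mat k) = 0" "bracket (scalar_mat k) f = 0"
  by (simp_all add: bracket_def mat_mul_scalar_left mat_mul_scalar_right mult.commute)

lemma square_scalar [simp]: "mat_mul (scalar_mat k) (scalar_mat k) = (scalar_mat k :: 'a::finite bmat)"
  unfolding mat_mul_scalar_left by (simp add: scalar_mat_def fun_eq_iff)

lemma scalar_mat_add: "scalar_mat (a + b) = (scalar_mat a + scalar_mat b :: 'a bmat)"
  by (simp add: scalar_mat_def fun_eq_iff)

lemma scalar_mat_0 [simp]: "scalar_mat 0 = (0 :: 'a bmat)"
  by (simp add: scalar_mat_def fun_eq_iff)

lemma scalar_mat_eq_iff [simp]: "scalar_mat a = (scalar_mat b :: 'a bmat) \<longleftrightarrow> a = b"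
  by (metis scalar_mat_def)

lemma ia_center_iff:
  "c \<in> ia_center \<longleftrightarrow> c \<in> IA \<and> (\<forall>f\<in>IA. bracket c f = 0)"
  by (auto simp: ia_center_def bracket_eq_0_iff ia_mult_eq_mat_mul)

lemma ia_idempotents_iff: "e \<in> ia_idempotents \<longleftrightarrow> e \<in> IA \<and> mat_mul e e = e"
  by (auto simp: ia_idempotents_def ia_mult_eq_mat_mul)

lemma scalar_mat_ia_center [simp]: "scalar_mat k \<in> ia_center"
  by (simp add: ia_center_iff)

lemma ia_center_add: "a \<in> ia_center \<Longrightarrow> b \<in> ia_center \<Longrightarrow> a + b \<in> ia_center"
  by (auto simp: ia_center_iff bracket_add_left)

lemma ia_center_eq_scalar_mat:
  fixes c :: "'a::{order,finite} bmat"
  assumes "c \<in> ia_center" and "poset_connected TYPE('a)"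
  shows "c = scalar_mat (c z z)"
proof -
  have c: "c \<in> IA" and comm: "\<And>f. f \<in> IA \<Longrightarrow> mat_mul c f = mat_mul f c"
    using assms(1) by (auto simp: ia_center_iff bracket_eq_0_iff)
  have off_diag: "c x y = 0" if "x \<noteq> y" for x y
  proof (cases "x \<le> y")
    case True
    then have "mat_mul c (unit_mat x x) x y = mat_mul (unit_mat x x) c x y"
      using comm unit_mat_IA[of x x] by simp
    then show ?thesis
      using that by (simp add: mat_mul_unit_left mat_mul_unit_right)
  next
    case False
    then show ?thesis
      using c by (simp add: IA_iff)
  qed
  have diag_le: "c x x = c y y" if "x \<le> y" for x y
  proof -
    have "mat_mul c (unit_mat x y) x y = mat_mul (unit_mat x y) c x y"
      using comm[OF unit_mat_IA[OF that]] by simp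
    then show ?thesis
      by (simp add: mat_mul_unit_left mat_mul_unit_right)
  qed
  have diag_const: "c z z = c x x" for x
    using assms(2)[unfolded poset_connected_def, rule_format, of z x]
  proof (induction rule: rtranclp_induct)
    case (step y w)
    from step.hyps(2) have "c y y = c w w"
      using diag_le[of y w] diag_le[of w y] by argo
    with step.IH show ?case
      by simp
  qed simp
  show ?thesis
  proof (intro ext)
    fix x y
    show "c x y = scalar_mat (c z z) x y"
      using off_diag[of x y] diag_const[of x] by (simp add: scalar_mat_def)
  qed
qed

lemma idempotent_if_square_add_self_central:
  fixes f :: "'a::{order,finite} bmat"
  assumes "f \<in> IA" "mat_mul f f + f \<in> ia_center" "poset_connected TYPE('a)"
  shows "f \<in> ia_idempotents"
proof -
  fix z :: 'a
  have "(mat_mul f f + f) z z = 0"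
    using mat_mul_diag[OF assms(1,1)] by simp
  then have "mat_mul f f + f = 0"
    using ia_center_eq_scalar_mat[OF assms(2,3), of z] by simp
  then show ?thesis
    using assms(1) by (simp add: ia_idempotents_iff bmat_add_eq_0_iff)
qed

lemma idempotent_add_scalar:
  assumes "e \<in> ia_idempotents"
  shows "e + scalar_mat k \<in> ia_idempotents"
  using assms by (auto simp: ia_idempotents_iff square_add)

section \<open>Lie automorphisms and shift maps preserve idempotents\<close>

lemma lie_automorphism_bracket:
  fixes \<psi> :: "'a::{order,finite} bmat \<Rightarrow> 'a bmat"
  assumes "lie_automorphism \<psi>" "a \<in> IA" "b \<in> IA"
  shows "\<psi> (bracket a b) = bracket (\<psi> a) (\<psi> b)"
proof -
  have "\<psi> a \<in> IA" "\<psi> b \<in> IA"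
    using assms by (auto simp: lie_automorphism_def ia_additive_def)
  then show ?thesis
    using assms by (simp add: lie_automorphism_def bracket_def ia_mult_eq_mat_mul)
qed

lemma lie_automorphism_idempotent:
  fixes \<psi> :: "'a::{order,finite} bmat \<Rightarrow> 'a bmat"
  assumes lie: "lie_automorphism \<psi>" and e: "e \<in> ia_idempotents"
    and conn: "poset_connected TYPE('a)"
  shows "\<psi> e \<in> ia_idempotents"
proof (rule idempotent_if_square_add_self_central[OF _ _ conn])
  have e_IA: "e \<in> IA" and ee: "mat_mul e e = e"
    using e by (auto simp: ia_idempotents_iff)
  have \<psi>_IA: "\<psi> a \<in> IA" if "a \<in> IA" for a
    using lie that by (auto simp: lie_automorphism_def ia_additive_def)
  show f_IA: "\<psi> e \<in> IA"
    using \<psi>_IA e_IA .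
  show "mat_mul (\<psi> e) (\<psi> e) + \<psi> e \<in> ia_center"
    unfolding ia_center_iff
  proof (intro conjI ballI)
    show "mat_mul (\<psi> e) (\<psi> e) + \<psi> e \<in> IA"
      using f_IA by blast
    fix y :: "'a bmat"
    assume "y \<in> IA"
    then obtain b where b: "b \<in> IA" "y = \<psi> b"
      using lie unfolding lie_automorphism_def ia_bijective_def bij_betw_def by blast
    have "bracket (mat_mul (\<psi> e) (\<psi> e)) y = bracket (\<psi> e) (bracket (\<psi> e) (\<psi> b))"
      by (simp add: b bracket_square_left)
    also have "\<dots> = \<psi> (bracket e (bracket e b))"
      using b e_IA by (simp add: lie_automorphism_bracket[OF lie] bracket_IA)
    also have "\<dots> = \<psi> (bracket e b)"
      using bracket_square_left[of e b] by (simp only: ee)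
    also have "\<dots> = bracket (\<psi> e) y"
      using b e_IA by (simp add: lie_automorphism_bracket[OF lie])
    finally show "bracket (mat_mul (\<psi> e) (\<psi> e) + \<psi> e) y = 0"
      by (simp add: bracket_add_left)
  qed
qed

lemma shift_map_eq_add_scalar:
  fixes \<tau> :: "'a::{order,finite} bmat \<Rightarrow> 'a bmat"
  assumes "shift_map \<tau>" "f \<in> IA" "poset_connected TYPE('a)"
  obtains k where "\<tau> f = f + scalar_mat k"
proof -
  have "\<tau> f + f \<in> ia_center"
    using assms(1,2) by (simp add: shift_map_def bmat_diff_eq_add)
  then have "\<tau> f + f = scalar_mat (\<tau> f z z + f z z)" for z
    using ia_center_eq_scalar_mat[OF _ assms(3)] by fastforce
  then show ?thesis
    using that by (metis bmat_add_eq_iff add.commute)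
qed

lemma shift_after_lie_automorphism_idempotent:
  fixes \<tau> \<psi> :: "'a::{order,finite} bmat \<Rightarrow> 'a bmat"
  assumes "shift_map \<tau>" "lie_automorphism \<psi>" "poset_connected TYPE('a)"
    and "e \<in> ia_idempotents"
  shows "\<tau> (\<psi> e) \<in> ia_idempotents"
proof -
  have "\<psi> e \<in> ia_idempotents"
    by (rule lie_automorphism_idempotent[OF assms(2,4,3)])
  moreover obtain k where "\<tau> (\<psi> e) = \<psi> e + scalar_mat k"
    using shift_map_eq_add_scalar[OF assms(1) _ assms(3)] calculation
    by (metis ia_idempotents_iff)
  ultimately show ?thesis
    by (simp add: idempotent_add_scalar)
qed

section \<open>Factorization into a shift map and a Lie automorphism\<close>

lemma bracket_preserving_if_square_preserving:
  fixes \<psi> :: "'a::{order,finite} bmat \<Rightarrow> 'a bmat"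
  assumes add: "\<And>a b. a \<in> IA \<Longrightarrow> b \<in> IA \<Longrightarrow> \<psi> (a + b) = \<psi> a + \<psi> b"
    and square: "\<And>a. a \<in> IA \<Longrightarrow> \<psi> (mat_mul a a) = mat_mul (\<psi> a) (\<psi> a)"
    and "a \<in> IA" "b \<in> IA"
  shows "\<psi> (bracket a b) = bracket (\<psi> a) (\<psi> b)"
proof -
  have "bracket a b = mat_mul (a + b) (a + b) + mat_mul a a + mat_mul b b"
    by (simp add: square_add add_ac)
  then have "\<psi> (bracket a b) = \<psi> (mat_mul (a + b) (a + b)) + \<psi> (mat_mul a a) + \<psi> (mat_mul b b)"
    using assms(3,4) by (simp add: add mat_mul_IA IA_add)
  also have "\<dots> = mat_mul (\<psi> a + \<psi> b) (\<psi> a + \<psi> b) + mat_mul (\<psi> a) (\<psi> a) + mat_mul (\<psi> b) (\<psi> b)"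
    using assms(3,4) by (simp add: square add IA_add)
  also have "\<dots> = bracket (\<psi> a) (\<psi> b)"
    by (simp add: square_add add_ac)
  finally show ?thesis .
qed

lemma ia_additive_inv_into:
  fixes \<psi> :: "'a::order bmat \<Rightarrow> 'a bmat"
  assumes "ia_additive \<psi>" "ia_bijective \<psi>"
  shows "ia_additive (inv_into IA \<psi>)"
  unfolding ia_additive_def
proof (intro conjI ballI)
  have bij: "bij_betw \<psi> IA IA"
    using assms(2) by (simp add: ia_bijective_def)
  show "inv_into IA \<psi> ` IA \<subseteq> IA"
    using bij by (simp add: bij_betw_def inv_into_into image_subsetI)
  fix f g :: "'a bmat"
  assume "f \<in> IA" "g \<in> IA"
  then obtain a b where ab: "a \<in> IA" "b \<in> IA" "f = \<psi> a" "g = \<psi> b"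
    using bij by (metis bij_betw_imp_surj_on imageE)
  then have "f + g = \<psi> (a + b)"
    using assms(1) by (simp add: ia_additive_def)
  then show "inv_into IA \<psi> (f + g) = inv_into IA \<psi> f + inv_into IA \<psi> g"
    using ab bij by (simp add: bij_betw_inv_into_left IA_add)
qed

lemma shift_map_factorization:
  fixes \<phi> \<psi> :: "'a::{order,finite} bmat \<Rightarrow> 'a bmat"
  assumes "ia_additive \<phi>" "ia_bijective \<phi>" "ia_additive \<psi>" "ia_bijective \<psi>"
    and central: "\<And>a. a \<in> IA \<Longrightarrow> \<phi> a + \<psi> a \<in> ia_center"
  defines "\<tau> \<equiv> \<phi> \<circ> inv_into IA \<psi>"
  shows "shift_map \<tau>" "ia_bijective \<tau>" "\<forall>f\<in>IA. \<phi> f = \<tau> (\<psi> f)"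
proof -
  have bij: "bij_betw \<psi> IA IA"
    using assms(4) by (simp add: ia_bijective_def)
  have inv: "inv_into IA \<psi> f \<in> IA" "\<psi> (inv_into IA \<psi> f) = f" if "f \<in> IA" for f
    using that bij by (auto simp: bij_betw_def inv_into_into f_inv_into_f)
  have "ia_additive \<tau>"
    using assms(1) ia_additive_inv_into[OF assms(3,4)] inv
    by (auto simp: \<tau>_def ia_additive_def)
  moreover have "\<tau> f - f \<in> ia_center" if "f \<in> IA" for f
    using central[of "inv_into IA \<psi> f"] inv that by (simp add: \<tau>_def bmat_diff_eq_add)
  ultimately show "shift_map \<tau>"
    by (simp add: shift_map_def)
  show "ia_bijective \<tau>"
    using bij_betw_trans[OF bij_betw_inv_into[OF bij]] assms(2) by (simp add: \<tau>_def ia_bijective_def)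
  show "\<forall>f\<in>IA. \<phi> f = \<tau> (\<psi> f)"
    using bij by (simp add: \<tau>_def bij_betw_inv_into_left)
qed

section \<open>Additive bijections preserving idempotents\<close>

lemmas unit_mat_idempotent_simps = ia_idempotents_iff mat_mul_add_left mat_mul_add_right mat_mul_unit_unit
  IA_add unit_mat_IA order.strict_implies_order

locale idempotent_preserver =
  fixes \<phi> :: "'a::{order,finite} bmat \<Rightarrow> 'a bmat"
  assumes additive: "ia_additive \<phi>" and bijective: "ia_bijective \<phi>"
    and preserves_idempotents: "\<phi> ` ia_idempotents \<subseteq> ia_idempotents"
begin

lemma map_IA [intro]: "f \<in> IA \<Longrightarrow> \<phi> f \<in> IA"
  using additive by (auto simp: ia_additive_def)

lemma map_add: "f \<in> IA \<Longrightarrow> g \<in> IA \<Longrightarrow> \<phi> (f + g) = \<phi> f + \<phi> g"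
  using additive by (simp add: ia_additive_def)

lemma map_zero [simp]: "\<phi> 0 = 0"
  using map_add[of 0 0] by simp

lemma map_surj: "y \<in> IA \<Longrightarrow> \<exists>b\<in>IA. y = \<phi> b"
  using bijective unfolding ia_bijective_def bij_betw_def by blast

lemma map_inj: "a \<in> IA \<Longrightarrow> b \<in> IA \<Longrightarrow> \<phi> a = \<phi> b \<Longrightarrow> a = b"
  using bijective unfolding ia_bijective_def bij_betw_def inj_on_def by blast

definition square_defect :: "'a bmat \<Rightarrow> 'a bmat" where
  "square_defect a = \<phi> (mat_mul a a) + mat_mul (\<phi> a) (\<phi> a)"

definition bracket_defect :: "'a bmat \<Rightarrow> 'a bmat \<Rightarrow> 'a bmat" where
  "bracket_defect a b = \<phi> (bracket a b) + bracket (\<phi> a) (\<phi> b)"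

lemma square_defect_zero [simp]: "square_defect 0 = 0"
  by (simp add: square_defect_def)

lemma square_defect_add:
  "a \<in> IA \<Longrightarrow> b \<in> IA \<Longrightarrow> square_defect (a + b) = square_defect a + square_defect b + bracket_defect a b"
  by (simp add: square_defect_def bracket_defect_def square_add map_add mat_mul_IA bracket_IA IA_add add_ac)

lemma square_defect_idempotent:
  assumes "e \<in> ia_idempotents"
  shows "square_defect e = 0"
proof -
  have "\<phi> e \<in> ia_idempotents"
    using assms preserves_idempotents by blast
  then show ?thesis
    using assms by (simp add: square_defect_def ia_idempotents_iff)
qed

lemma bracket_defect_idempotents:
  assumes "a \<in> ia_idempotents" "b \<in> ia_idempotents" "a + b \<in> ia_idempotents"
  shows "bracket_defect a b = 0"
  using square_defect_add[of a b] assms by (simp add: square_defect_idempotent ia_idempotents_iff)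

lemma bracket_defect_commute: "bracket_defect a b = bracket_defect b a"
  by (simp add: bracket_defect_def bracket_commute)

lemma bracket_defect_self [simp]: "bracket_defect a a = 0"
  by (simp add: bracket_defect_def)

lemma ia_center_zero [simp]: "0 \<in> ia_center"
  by (simp add: ia_center_iff)

lemma bracket_defect_zero [simp]: "bracket_defect 0 a = 0" "bracket_defect a 0 = 0"
  by (simp_all add: bracket_defect_def)

lemma bracket_defect_add_left:
  "a \<in> IA \<Longrightarrow> b \<in> IA \<Longrightarrow> c \<in> IA \<Longrightarrow> bracket_defect (a + b) c = bracket_defect a c + bracket_defect b c"
  by (simp add: bracket_defect_def bracket_add_left map_add bracket_IA add_ac)

lemma bracket_defect_add_right:
  "a \<in> IA \<Longrightarrow> b \<in> IA \<Longrightarrow> c \<in> IA \<Longrightarrow> bracket_defect c (a + b) = bracket_defect c a + bracket_defect c b"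
  using bracket_defect_add_left[of a b c] by (simp add: bracket_defect_commute)

lemma bracket_map: "bracket (\<phi> a) (\<phi> b) = bracket_defect a b + \<phi> (bracket a b)"
  by (simp add: bracket_defect_def add_ac)

lemma square_defect_diag_unit [simp]: "square_defect (unit_mat x x) = 0"
  by (rule square_defect_idempotent) (auto simp: unit_mat_idempotent_simps)

lemma bracket_defect_diag_units:
  "x \<noteq> y \<Longrightarrow> bracket_defect (unit_mat x x) (unit_mat y y) = 0"
  by (rule bracket_defect_idempotents) (auto simp: unit_mat_idempotent_simps)

lemma bracket_defect_unit_diag_apart:
  assumes "u < v" "x \<noteq> u" "x \<noteq> v"
  shows "bracket_defect (unit_mat u v) (unit_mat x x) = 0"
proof -
  have "bracket_defect (unit_mat x x) (unit_mat u u + unit_mat u v) = 0"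
    using assms by (intro bracket_defect_idempotents) (auto simp: unit_mat_idempotent_simps)
  then show ?thesis
    using assms bracket_defect_diag_units[of x u]
    by (simp add: bracket_defect_add_right unit_mat_IA bracket_defect_commute)
qed

lemma bracket_defect_unit_diag_source:
  assumes "u < v"
  shows "bracket_defect (unit_mat u v) (unit_mat u u) = square_defect (unit_mat u v)"
proof -
  have "square_defect (unit_mat u u + unit_mat u v) = 0"
    using assms by (intro square_defect_idempotent) (auto simp: unit_mat_idempotent_simps)
  then show ?thesis
    using assms square_defect_add[of "unit_mat u u" "unit_mat u v"]
    by (simp add: unit_mat_IA bmat_add_eq_0_iff bracket_defect_commute)
qed

lemma bracket_defect_unit_diag_target:
  assumes "u < v"
  shows "bracket_defect (unit_mat u v) (unit_mat v v) = square_defect (unit_mat u v)"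
proof -
  have "square_defect (unit_mat v v + unit_mat u v) = 0"
    using assms by (intro square_defect_idempotent) (auto simp: unit_mat_idempotent_simps)
  then show ?thesis
    using assms square_defect_add[of "unit_mat v v" "unit_mat u v"]
    by (simp add: unit_mat_IA bmat_add_eq_0_iff bracket_defect_commute)
qed

lemma bracket_defect_unit_same_source:
  assumes "u < v" "u < y" "y \<noteq> v"
  shows "bracket_defect (unit_mat u v) (unit_mat u y) = 0"
proof -
  have "square_defect (unit_mat u u + unit_mat u v + unit_mat u y) = 0"
    using assms by (intro square_defect_idempotent) (auto simp: unit_mat_idempotent_simps)
  moreover have "square_defect (unit_mat u u + unit_mat u v) = 0"
    using assms by (intro square_defect_idempotent) (auto simp: unit_mat_idempotent_simps)
  ultimately show ?thesis
    using assms square_defect_add[of "unit_mat u u + unit_mat u v" "unit_mat u y"]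
      bracket_defect_unit_diag_source[of u y] bracket_defect_commute[of "unit_mat u u"]
      bracket_defect_add_left[of "unit_mat u u" "unit_mat u v" "unit_mat u y"]
    by (simp add: unit_mat_IA IA_add)
qed

lemma bracket_defect_unit_same_target:
  assumes "u < v" "x < v" "x \<noteq> u"
  shows "bracket_defect (unit_mat u v) (unit_mat x v) = 0"
proof -
  have "square_defect (unit_mat v v + unit_mat u v + unit_mat x v) = 0"
    using assms by (intro square_defect_idempotent) (auto simp: unit_mat_idempotent_simps)
  moreover have "square_defect (unit_mat v v + unit_mat u v) = 0"
    using assms by (intro square_defect_idempotent) (auto simp: unit_mat_idempotent_simps)
  ultimately show ?thesis
    using assms square_defect_add[of "unit_mat v v + unit_mat u v" "unit_mat x v"]
      bracket_defect_unit_diag_target[of x v] bracket_defect_commute[of "unit_mat v v"]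
      bracket_defect_add_left[of "unit_mat v v" "unit_mat u v" "unit_mat x v"]
    by (simp add: unit_mat_IA IA_add)
qed

lemma bracket_defect_unit_disjoint:
  assumes "u < v" "x < y" "x \<noteq> u" "x \<noteq> v" "y \<noteq> u" "y \<noteq> v"
  shows "bracket_defect (unit_mat u v) (unit_mat x y) = 0"
proof -
  have "bracket_defect (unit_mat u u + unit_mat u v) (unit_mat x x + unit_mat x y) = 0"
    using assms by (intro bracket_defect_idempotents) (auto simp: unit_mat_idempotent_simps)
  then show ?thesis
    using assms bracket_defect_diag_units[of u x] bracket_defect_unit_diag_apart[of x y u]
      bracket_defect_unit_diag_apart[of u v x]
    by (simp add: unit_mat_IA IA_add bracket_defect_add_left bracket_defect_add_right bracket_defect_commute)
qed

lemma bracket_defect_unit_chain: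
  assumes "u < v" "v < y"
  shows "bracket_defect (unit_mat u v) (unit_mat v y) = square_defect (unit_mat u y)"
proof -
  have uy: "u < y"
    using assms by (rule less_trans)
  have "bracket_defect (unit_mat u u + unit_mat u v + unit_mat u y) (unit_mat y y + unit_mat v y) = 0"
    using assms uy
    by (intro bracket_defect_idempotents) (auto simp: unit_mat_idempotent_simps)
  then show ?thesis
    using assms uy bracket_defect_diag_units[of u y] bracket_defect_unit_diag_apart[of v y u]
      bracket_defect_unit_diag_apart[of u v y] bracket_defect_unit_diag_target[of u y]
      bracket_defect_unit_same_target[of v y u] bracket_defect_commute[of "unit_mat v y" "unit_mat u u"]
      bracket_defect_commute[of "unit_mat v y" "unit_mat u y"]
    by (simp add: unit_mat_IA IA_add bracket_defect_add_left bracket_defect_add_right bmat_add_eq_0_iff)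
qed

lemma bracket_defect_unit_unit:
  assumes "u < v" "x \<le> y"
  shows "bracket_defect (unit_mat u v) (unit_mat x y) =
    (if x = y \<and> (x = u \<or> x = v) then square_defect (unit_mat u v)
     else if y = u then square_defect (unit_mat x v)
     else if x = v then square_defect (unit_mat u y) else 0)"
proof (cases "x = y")
  case True
  then show ?thesis
    using assms bracket_defect_unit_diag_source bracket_defect_unit_diag_target
      bracket_defect_unit_diag_apart
    by auto
next
  case False
  with assms have xy: "x < y"
    by simp
  consider "x = u" "y = v" | "y = u" | "x = v" | "x = u" "y \<noteq> v" | "y = v" "x \<noteq> u"
    | "x \<noteq> u" "x \<noteq> v" "y \<noteq> u" "y \<noteq> v"
    by blast
  then show ?thesis
  proof cases
    case 2
    then show ?thesis
      using assms xy bracket_defect_unit_chain[of x u v] by (simp add: bracket_defect_commute)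
  qed (use assms xy bracket_defect_unit_chain bracket_defect_unit_same_source
      bracket_defect_unit_same_target bracket_defect_unit_disjoint in auto)
qed

lemma square_defect_unit_central:
  assumes "u < v"
  shows "square_defect (unit_mat u v) \<in> ia_center"
  using assms
  \<comment> \<open>the square defects occurring in the computation belong to strictly longer intervals\<close>
proof (induction "card {..u} + card {v..}" arbitrary: u v rule: less_induct)
  case less
  have IH_left: "square_defect (unit_mat x v) \<in> ia_center" if "x < u" for x
  proof (rule less.hyps)
    show "card {..x} + card {v..} < card {..u} + card {v..}"
      using that by (intro add_strict_right_mono psubset_card_mono) auto
  qed (use that less.prems in auto)
  have IH_right: "square_defect (unit_mat u y) \<in> ia_center" if "v < y" for y
  proof (rule less.hyps)
    show "card {..u} + card {y..} < card {..u} + card {v..}"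
      using that by (intro add_strict_left_mono psubset_card_mono) auto
  qed (use that less.prems in auto)
  define e :: "'a bmat" where "e = unit_mat u v"
  define N where "N = \<phi> e"
  have e: "e \<in> IA"
    using less.prems by (simp add: e_def unit_mat_IA)
  then have N: "N \<in> IA"
    by (simp add: N_def map_IA)
  have ee: "mat_mul e e = 0"
    using less.prems by (auto simp: e_def mat_mul_unit_unit)
  have square_defect_e: "square_defect e = mat_mul N N"
    by (simp add: square_defect_def ee N_def)
  have bracket_with_central: "bracket N c = 0" if "c \<in> ia_center" for c
    using that N by (simp add: ia_center_iff bracket_commute)
  have bracket_N_square_defect: "bracket N (square_defect e) = 0"
    by (simp add: square_defect_e bracket_square_self)
  have key: "bracket (mat_mul N N) (\<phi> b) = bracket N (bracket_defect e b) + bracket_defect e (bracket e b)"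
    for b
  proof -
    have "bracket e (bracket e b) = 0"
      by (metis bracket_square_left bracket_zero(1) ee)
    then show ?thesis
      by (simp add: bracket_square_left bracket_map bracket_add_right N_def)
  qed
  have unit_case: "bracket (mat_mul N N) (\<phi> (unit_mat x y)) = 0" if "x \<le> y" for x y
  proof -
    have "bracket N (bracket_defect e (unit_mat x y)) = 0"
      using bracket_defect_unit_unit[OF less.prems that, folded e_def] IH_left IH_right that
        bracket_with_central bracket_N_square_defect
      by (auto simp: order.order_iff_strict)
    moreover have "bracket_defect e (bracket e (unit_mat x y)) = 0"
      using less.prems that
      by (auto simp: e_def bracket_unit_unit bracket_defect_unit_unit)
    ultimately show ?thesis
      by (simp add: key)
  qed
  have "bracket (mat_mul N N) (\<phi> b) = 0" if "b \<in> IA" for b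
    by (rule IA_induct[where P = "\<lambda>b. bracket (mat_mul N N) (\<phi> b) = 0", OF that])
      (simp_all add: unit_case map_add bracket_add_right)
  then show ?case
    using N map_surj by (auto simp: ia_center_iff square_defect_e e_def[symmetric])
qed

lemma bracket_defect_unit_unit_central:
  assumes "u \<le> v" "x \<le> y"
  shows "bracket_defect (unit_mat u v) (unit_mat x y) \<in> ia_center"
proof -
  have strict: "bracket_defect (unit_mat u v) (unit_mat x y) \<in> ia_center" if "u < v" "x \<le> y" for u v x y
    using bracket_defect_unit_unit[OF that] that square_defect_unit_central
    by (auto simp: order.order_iff_strict intro: less_le_trans le_less_trans)
  consider "u < v" | "x < y" | "u = v" "x = y"
    using assms by (auto simp: order.order_iff_strict)
  then show ?thesis
  proof cases
    case 2
    then show ?thesis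
      using strict[of x y u v] assms by (simp add: bracket_defect_commute)
  next
    case 3
    then show ?thesis
      using bracket_defect_diag_units[of u x] by (cases "u = x") simp_all
  qed (use strict assms in blast)
qed

lemma bracket_defect_central:
  assumes "a \<in> IA" "b \<in> IA"
  shows "bracket_defect a b \<in> ia_center"
proof -
  have unit: "bracket_defect a (unit_mat x y) \<in> ia_center" if "x \<le> y" for x y
    by (rule IA_induct[where P = "\<lambda>a. bracket_defect a (unit_mat x y) \<in> ia_center", OF assms(1)])
      (use that in \<open>simp_all add: bracket_defect_unit_unit_central bracket_defect_add_left
          unit_mat_IA ia_center_add\<close>)
  show ?thesis
    by (rule IA_induct[where P = "\<lambda>b. bracket_defect a b \<in> ia_center", OF assms(2)])
      (simp_all add: unit assms(1) bracket_defect_add_right ia_center_add)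
qed

lemma square_defect_central:
  assumes "a \<in> IA"
  shows "square_defect a \<in> ia_center"
proof (rule IA_induct[where P = "\<lambda>a. square_defect a \<in> ia_center", OF assms])
  fix u v :: 'a
  assume "u \<le> v"
  then show "square_defect (unit_mat u v) \<in> ia_center"
    using square_defect_unit_central by (cases "u = v") (simp_all add: order.order_iff_strict)
qed (simp_all add: square_defect_add bracket_defect_central ia_center_add)

end

locale connected_idempotent_preserver = idempotent_preserver \<phi>
  for \<phi> :: "'a::{order,finite} bmat \<Rightarrow> 'a bmat" +
  fixes z :: 'a
  assumes connected: "poset_connected TYPE('a)"
begin

definition correction :: "'a bmat \<Rightarrow> bit" where
  "correction a = \<phi> a z z + a z z"

text \<open>The square defect is a scalar whose entry at \<open>(z, z)\<close> is
  \<open>correction (a\<^sup>2) + correction a\<close>, so this scalar shift makes \<open>lie_part\<close> preserve squares.\<close>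

definition lie_part :: "'a bmat \<Rightarrow> 'a bmat" where
  "lie_part a = \<phi> a + scalar_mat (correction a)"

lemma lie_part_IA: "a \<in> IA \<Longrightarrow> lie_part a \<in> IA"
  by (auto simp: lie_part_def)

lemma lie_part_add: "a \<in> IA \<Longrightarrow> b \<in> IA \<Longrightarrow> lie_part (a + b) = lie_part a + lie_part b"
  by (simp add: lie_part_def correction_def map_add scalar_mat_add add_ac)

lemma lie_part_zero [simp]: "lie_part 0 = 0"
  by (simp add: lie_part_def correction_def)

lemma lie_part_diag: "lie_part a z z = a z z"
  by (simp add: lie_part_def correction_def scalar_mat_def)

lemma map_add_lie_part_central: "\<phi> a + lie_part a \<in> ia_center"
  by (simp add: lie_part_def)

lemma lie_part_square:
  assumes a: "a \<in> IA"
  shows "lie_part (mat_mul a a) = mat_mul (lie_part a) (lie_part a)"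
proof -
  have "square_defect a z z = correction (mat_mul a a) + correction a"
    using mat_mul_diag[OF a a] mat_mul_diag[OF map_IA[OF a] map_IA[OF a]]
    by (simp add: square_defect_def correction_def add_ac)
  then have "square_defect a = scalar_mat (correction (mat_mul a a) + correction a)"
    using ia_center_eq_scalar_mat[OF square_defect_central[OF a] connected, of z] by simp
  then have "\<phi> (mat_mul a a) = mat_mul (\<phi> a) (\<phi> a) + scalar_mat (correction (mat_mul a a) + correction a)"
    unfolding square_defect_def bmat_add_eq_iff .
  then show ?thesis
    by (simp add: lie_part_def square_add scalar_mat_add add_ac)
qed

lemma lie_part_bracket: "a \<in> IA \<Longrightarrow> b \<in> IA \<Longrightarrow> lie_part (bracket a b) = bracket (lie_part a) (lie_part b)"
  by (rule bracket_preserving_if_square_preserving[where \<psi> = lie_part]) (simp_all add: lie_part_add lie_part_square)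

lemma lie_part_one: "lie_part (scalar_mat 1) = scalar_mat 1"
proof -
  have "lie_part (scalar_mat 1) \<in> ia_center"
    unfolding ia_center_iff
  proof (intro conjI ballI)
    show "lie_part (scalar_mat 1) \<in> IA"
      by (simp add: lie_part_IA)
    fix f :: "'a bmat"
    assume "f \<in> IA"
    then obtain b where b: "b \<in> IA" "f = \<phi> b"
      using map_surj by blast
    then have "f = lie_part b + scalar_mat (correction b)"
      by (simp add: lie_part_def)
    then show "bracket (lie_part (scalar_mat 1)) f = 0"
      using b by (simp add: bracket_add_right flip: lie_part_bracket)
  qed
  then show ?thesis
    using ia_center_eq_scalar_mat[OF _ connected, of _ z] by (metis lie_part_diag scalar_mat_def)
qed

lemma map_one: "\<phi> (scalar_mat 1) = scalar_mat 1"
proof (cases "correction (scalar_mat 1)")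
  case one
  then have "\<phi> (scalar_mat 1) = \<phi> 0"
    using lie_part_one by (simp add: lie_part_def bmat_add_eq_0_iff)
  then have "scalar_mat 1 = (0 :: 'a bmat)"
    using map_inj[of "scalar_mat 1" 0] by simp
  then show ?thesis
    by (metis scalar_mat_0 scalar_mat_eq_iff zero_neq_one)
qed (use lie_part_one in \<open>simp add: lie_part_def\<close>)

lemma lie_part_inj: "inj_on lie_part IA"
proof (rule inj_onI)
  fix a b
  assume ab: "a \<in> IA" "b \<in> IA" "lie_part a = lie_part b"
  define c where "c = a + b"
  have c: "c \<in> IA" "lie_part c = 0"
    using ab by (simp_all add: c_def lie_part_add IA_add)
  then have \<phi>c: "\<phi> c = scalar_mat (correction c)"
    by (simp add: lie_part_def bmat_add_eq_0_iff)
  have "c = 0"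
  proof (cases "correction c")
    case zero
    then show ?thesis
      using \<phi>c c(1) map_inj[of c 0] by simp
  next
    case one
    then have "c = scalar_mat 1"
      using \<phi>c c(1) map_inj[of c "scalar_mat 1"] by (simp add: map_one)
    then show ?thesis
      using c(2) lie_part_diag[of c] by (simp add: scalar_mat_def)
  qed
  then show "a = b"
    by (simp add: c_def bmat_add_eq_0_iff)
qed

lemma lie_part_surj: "lie_part ` IA = IA"
proof
  show "lie_part ` IA \<subseteq> IA"
    using lie_part_IA by blast
  show "IA \<subseteq> lie_part ` IA"
  proof
    fix f :: "'a bmat"
    assume "f \<in> IA"
    then obtain b where b: "b \<in> IA" "f = \<phi> b"
      using map_surj by blast
    have b_part: "lie_part b = f + scalar_mat (correction b)"
      using b by (simp add: lie_part_def)
    have "lie_part (b + scalar_mat 1) = lie_part b + scalar_mat 1"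
      using b by (simp add: lie_part_add lie_part_one)
    then show "f \<in> lie_part ` IA"
    proof (cases "correction b")
      case zero
      then show ?thesis
        using b b_part by (intro rev_image_eqI[of b]) simp_all
    next
      case one
      then show ?thesis
        using b b_part \<open>lie_part (b + scalar_mat 1) = _\<close>
        by (intro rev_image_eqI[of "b + scalar_mat 1"]) (simp_all add: IA_add)
    qed
  qed
qed

lemma lie_automorphism_lie_part: "lie_automorphism lie_part"
  using lie_part_IA lie_part_add lie_part_bracket lie_part_inj lie_part_surj
  by (auto simp: lie_automorphism_def ia_additive_def ia_bijective_def bij_betw_def
      bracket_def ia_mult_eq_mat_mul)

lemma shift_lie_factorization:
  "\<exists>\<tau> \<psi>. shift_map \<tau> \<and> ia_bijective \<tau> \<and> lie_automorphism \<psi> \<and> (\<forall>f\<in>IA. \<phi> f = \<tau> (\<psi> f))"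
proof -
  have "ia_additive lie_part" "ia_bijective lie_part"
    using lie_automorphism_lie_part by (simp_all add: lie_automorphism_def)
  then show ?thesis
    using shift_map_factorization[OF additive bijective _ _ map_add_lie_part_central]
      lie_automorphism_lie_part
    by blast
qed

end

theorem theorem5p20:
  fixes \<phi> :: "('a::{order,finite} \<Rightarrow> 'a \<Rightarrow> bit) \<Rightarrow> ('a \<Rightarrow> 'a \<Rightarrow> bit)"
  assumes "poset_connected TYPE('a)"
    and "ia_additive \<phi>" and "ia_bijective \<phi>"
  shows "\<phi> ` ia_idempotents \<subseteq> ia_idempotents \<longleftrightarrow>
    (\<exists>\<tau> \<psi>. shift_map \<tau> \<and> ia_bijective \<tau> \<and> lie_automorphism \<psi> \<and>
       (\<forall>f\<in>IA. \<phi> f = \<tau> (\<psi> f)))"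
proof
  assume "\<phi> ` ia_idempotents \<subseteq> ia_idempotents"
  then interpret connected_idempotent_preserver \<phi> undefined
    using assms by unfold_locales
  show "\<exists>\<tau> \<psi>. shift_map \<tau> \<and> ia_bijective \<tau> \<and> lie_automorphism \<psi> \<and>
      (\<forall>f\<in>IA. \<phi> f = \<tau> (\<psi> f))"
    by (rule shift_lie_factorization)
next
  assume "\<exists>\<tau> \<psi>. shift_map \<tau> \<and> ia_bijective \<tau> \<and> lie_automorphism \<psi> \<and>
      (\<forall>f\<in>IA. \<phi> f = \<tau> (\<psi> f))"
  then obtain \<tau> \<psi> where \<tau>\<psi>: "shift_map \<tau>" "lie_automorphism \<psi>" "\<forall>f\<in>IA. \<phi> f = \<tau> (\<psi> f)"
    by blast
  then show "\<phi> ` ia_idempotents \<subseteq> ia_idempotents"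
    using shift_after_lie_automorphism_idempotent[OF \<tau>\<psi>(1,2) assms(1)]
    by (auto simp: ia_idempotents_iff)
qed

end
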